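(* Let $f:\Sigma^*\to\Sigma^*$ be a sequential transduction. Then $f$ is $\mathcal{A}p$-sequential if and only if $f$ is $\mathcal{A}p$-rational.
   Context: A congruence $\sim$ on $\Sigma^*$ is aperiodic if there is $n$ with $w^n\sim w^{n+1}$ for all words $w$; $\mathcal{A}p(\Sigma)$ is the set of aperiodic congruences of finite index. For an automaton $\mathcal A=(Q,\Delta,I,F)$, its transition congruence is $u\approx_{\mathcal A}v$ iff for all $p,q\in Q$, there is a run on $u$ from $p$ to $q$ iff there is one on $v$; $\mathcal A$ is aperiodic if $\approx_{\mathcal A}$ is aperiodic. A transducer $\mathcal T=(\mathcal A,o,i,t)$ consists of an automaton $\mathcal A$, outputs $o:\Delta\to\Sigma^*$, initial outputs $i:I\to\Sigma^*$ and final outputs $t:F\to\Sigma^*$, realizing the pairs $(u,i(q_0)\,o(\text{run})\,t(q_n))$ for accepting runs on $u$; it is functional if this relation is a partial function and sequential if $\mathcal A$ is deterministic. A transduction is sequential if realized by a sequential transducer, $\mathcal{A}p$-rational if realized by a functional transducer with aperiodic underlying automaton, and $\mathcal{A}p$-sequential if realized by a sequential transducer with aperiodic underlying automaton. *)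

theory Defs
  imports Main
begin

text \<open>Words over the alphabet 'a are lists. States of automata are natural numbers
(every finite state set can be renamed into nat).\<close>

definition wpow :: "'a list \<Rightarrow> nat \<Rightarrow> 'a list" where
  "wpow w n = concat (replicate n w)"

definition aperiodic_rel :: "('a list \<Rightarrow> 'a list \<Rightarrow> bool) \<Rightarrow> bool" where
  "aperiodic_rel R \<longleftrightarrow> (\<exists>n. \<forall>w. R (wpow w n) (wpow w (Suc n)))"

record 'a automaton =
  states :: "nat set"
  trans  :: "(nat \<times> 'a \<times> nat) set"
  init   :: "nat set"
  final  :: "nat set"

definition wf_aut :: "'a automaton \<Rightarrow> bool" where
  "wf_aut A \<longleftrightarrow> finite (states A) \<and> trans A \<subseteq> states A \<times> UNIV \<times> states A
     \<and> init A \<subseteq> states A \<and> final A \<subseteq> states A"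

inductive is_run :: "'a automaton \<Rightarrow> nat \<Rightarrow> (nat \<times> 'a \<times> nat) list \<Rightarrow> nat \<Rightarrow> bool"
  for A where
  run_nil: "is_run A p [] p"
| run_cons: "(p, a, q) \<in> trans A \<Longrightarrow> is_run A q ts r \<Longrightarrow> is_run A p ((p, a, q) # ts) r"

definition run_label :: "(nat \<times> 'a \<times> nat) list \<Rightarrow> 'a list" where
  "run_label ts = map (\<lambda>(p, a, q). a) ts"

definition trans_cong :: "'a automaton \<Rightarrow> 'a list \<Rightarrow> 'a list \<Rightarrow> bool" where
  "trans_cong A u v \<longleftrightarrow> (\<forall>p\<in>states A. \<forall>q\<in>states A.
      (\<exists>ts. is_run A p ts q \<and> run_label ts = u) \<longleftrightarrow> (\<exists>ts. is_run A p ts q \<and> run_label ts = v))"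

definition aperiodic_aut :: "'a automaton \<Rightarrow> bool" where
  "aperiodic_aut A \<longleftrightarrow> aperiodic_rel (trans_cong A)"

definition deterministic :: "'a automaton \<Rightarrow> bool" where
  "deterministic A \<longleftrightarrow> (\<forall>p q. p \<in> init A \<longrightarrow> q \<in> init A \<longrightarrow> p = q)
     \<and> (\<forall>p a q q'. (p, a, q) \<in> trans A \<longrightarrow> (p, a, q') \<in> trans A \<longrightarrow> q = q')"

record 'a transducer =
  aut  :: "'a automaton"
  out  :: "nat \<times> 'a \<times> nat \<Rightarrow> 'a list"
  iout :: "nat \<Rightarrow> 'a list"
  tout :: "nat \<Rightarrow> 'a list"

definition realized_rel :: "'a transducer \<Rightarrow> ('a list \<times> 'a list) set" where
  "realized_rel T = {(run_label ts, iout T q0 @ concat (map (out T) ts) @ tout T qn) | q0 ts qn.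
      q0 \<in> init (aut T) \<and> qn \<in> final (aut T) \<and> is_run (aut T) q0 ts qn}"

definition functional :: "'a transducer \<Rightarrow> bool" where
  "functional T \<longleftrightarrow> (\<forall>u v v'. (u, v) \<in> realized_rel T \<longrightarrow> (u, v') \<in> realized_rel T \<longrightarrow> v = v')"

definition realizes :: "'a transducer \<Rightarrow> ('a list \<Rightarrow> 'a list option) \<Rightarrow> bool" where
  "realizes T f \<longleftrightarrow> (\<forall>u v. (u, v) \<in> realized_rel T \<longleftrightarrow> f u = Some v)"

definition sequential_transduction :: "('a list \<Rightarrow> 'a list option) \<Rightarrow> bool" where
  "sequential_transduction f \<longleftrightarrow>
     (\<exists>T. wf_aut (aut T) \<and> deterministic (aut T) \<and> realizes T f)"

definition Ap_rational :: "('a list \<Rightarrow> 'a list option) \<Rightarrow> bool" where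
  "Ap_rational f \<longleftrightarrow>
     (\<exists>T. wf_aut (aut T) \<and> functional T \<and> aperiodic_aut (aut T) \<and> realizes T f)"

definition Ap_sequential :: "('a list \<Rightarrow> 'a list option) \<Rightarrow> bool" where
  "Ap_sequential f \<longleftrightarrow>
     (\<exists>T. wf_aut (aut T) \<and> deterministic (aut T) \<and> aperiodic_aut (aut T) \<and> realizes T f)"

end

theory Submission
  imports Defs "HOL-Library.Sublist"
begin

text \<open>A sequential function \<open>f\<close> has finitely many residuals \<open>u\<^sup>-\<^sup>1f\<close>, and its minimal
  sequential transducer, whose states are these residuals, is aperiodic as soon as the residuals of
  every residual \<open>g\<close> after \<open>z\<^sup>K\<close> and \<open>z\<^sup>K\<^sup>+\<^sup>1\<close> agree, for one \<open>K\<close> and all words \<open>z\<close>.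

  So let \<open>f\<close> be realized by an aperiodic functional transducer \<open>T\<close> and fix words \<open>x\<close>, \<open>z\<close>.
  The residuals of \<open>f\<close> after \<open>x z\<^sup>j\<close> are eventually periodic in \<open>j\<close>, say with period \<open>p\<close>.
  Pumping a loop of \<open>T\<close> inside \<open>z\<^sup>c\<^sup>p\<close>, and using aperiodicity to make the length of the loop
  congruent to \<open>1\<close> modulo \<open>p\<close>, shows that from the start of the period on these residuals have
  the same domain, and that on each input their outputs are suffixes of one another whose lengths
  differ by a shift independent of the input. At a position of minimal shift the next residual can
  therefore only prepend one fixed word to every output; since residuals have no common output
  prefix, this word is empty, and the sequence is constant.\<close>

section \<open>Residuals of partial word functions\<close>

lemma Longest_common_prefix_image_append:
  assumes "L \<noteq> {}" shows "Longest_common_prefix ((@) c ` L) = c @ Longest_common_prefix L"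
  using assms
proof (induction c)
  case (Cons a c)
  have "(@) (a # c) ` L = (#) a ` ((@) c ` L)" by auto
  then show ?case using Cons Longest_common_prefix_image_Cons[of "(@) c ` L" a] by auto
qed simp

lemma map_option_append_Nil [simp]: "map_option ((@) []) y = y"
  by (cases y) simp_all

lemma suffix_of_append_eq:
  assumes "a @ c = l @ g" "length a \<le> length l" shows "suffix g c"
proof -
  have "g = drop (length l) (a @ c)" using assms(1) by (metis append_eq_conv_conj)
  also have "\<dots> = drop (length l - length a) c" using assms(2) by simp
  finally show ?thesis by (simp add: suffix_drop)
qed

definition common_output :: "('a list \<Rightarrow> 'b list option) \<Rightarrow> 'a list \<Rightarrow> 'b list" where
  "common_output f u = Longest_common_prefix (ran (\<lambda>v. f (u @ v)))"

definition residual :: "('a list \<Rightarrow> 'b list option) \<Rightarrow> 'a list \<Rightarrow> 'a list \<Rightarrow> 'b list option" where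
  "residual f u = (\<lambda>v. map_option (drop (length (common_output f u))) (f (u @ v)))"

definition extendable :: "('a list \<Rightarrow> 'b list option) \<Rightarrow> 'a list \<Rightarrow> bool" where
  "extendable f u \<longleftrightarrow> (\<exists>v. f (u @ v) \<noteq> None)"

definition residuals :: "('a list \<Rightarrow> 'b list option) \<Rightarrow> ('a list \<Rightarrow> 'b list option) set" where
  "residuals f = residual f ` {u. extendable f u}"

lemma output_eq_common_output_residual:
  "f (u @ v) = map_option ((@) (common_output f u)) (residual f u v)"
proof (cases "f (u @ v)")
  case (Some y)
  then have "y \<in> ran (\<lambda>v. f (u @ v))" by (auto simp: ran_def)
  then have "prefix (common_output f u) y"
    unfolding common_output_def by (rule Longest_common_prefix_prefix)
  with Some show ?thesis by (auto simp: residual_def prefix_def)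
qed (simp add: residual_def)

lemma residual_eq_residual_Nil:
  assumes "\<And>v. f (u @ v) = map_option ((@) c) (H v)"
  shows "residual f u = residual H []"
    and "ran H \<noteq> {} \<Longrightarrow> common_output f u = c @ common_output H []"
proof -
  have ran_eq: "ran (\<lambda>v. f (u @ v)) = (@) c ` ran H"
    using assms by (auto simp: ran_def)
  show common: "ran H \<noteq> {} \<Longrightarrow> common_output f u = c @ common_output H []"
    by (simp add: common_output_def ran_eq Longest_common_prefix_image_append)
  show "residual f u = residual H []"
  proof
    fix v
    show "residual f u v = residual H [] v"
    proof (cases "H v")
      case (Some y)
      then have "ran H \<noteq> {}" by (auto simp: ran_def)
      with common Some show ?thesis by (simp add: residual_def assms)
    qed (simp add: residual_def assms)
  qed
qed

lemma residual_append: "residual f (u @ w) = residual (residual f u) w"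
proof -
  have "residual f (u @ w) = residual (\<lambda>v. residual f u (w @ v)) []"
    by (rule residual_eq_residual_Nil(1)) (simp add: output_eq_common_output_residual[of f u])
  also have "\<dots> = residual (residual f u) w"
    by (rule residual_eq_residual_Nil(1)[where c = "[]", symmetric]) simp
  finally show ?thesis .
qed

lemma extendable_iff_residual: "extendable f u \<longleftrightarrow> residual f u \<noteq> Map.empty"
  by (auto simp: extendable_def residual_def fun_eq_iff)

lemma extendable_appendD: "extendable f (u @ w) \<Longrightarrow> extendable f u"
  unfolding extendable_def by (metis append.assoc)

lemma common_output_append:
  assumes "extendable f (u @ w)"
  shows "common_output f (u @ w) = common_output f u @ common_output (residual f u) w"
proof -
  have decomp: "f ((u @ w) @ v) = map_option ((@) (common_output f u)) (residual f u (w @ v))" for v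
    using output_eq_common_output_residual[of f u] by simp
  have "ran (\<lambda>v. residual f u (w @ v)) \<noteq> {}"
    using assms decomp unfolding extendable_def ran_def by fastforce
  then show ?thesis
    using residual_eq_residual_Nil(2)[of f "u @ w" "common_output f u" "\<lambda>v. residual f u (w @ v)"] decomp
    by (simp add: common_output_def)
qed

lemma common_output_residual_Nil:
  "extendable f u \<Longrightarrow> common_output (residual f u) [] = []"
  using common_output_append[of f u "[]"] by simp

lemma residual_Nil_residual: "residual (residual f u) [] = residual f u"
  using residual_append[of f u "[]"] by simp

lemma residual_in_residuals:
  assumes "g \<in> residuals f" "residual g w \<noteq> Map.empty"
  shows "residual g w \<in> residuals f"
proof -
  obtain u where "g = residual f u" using assms(1) by (auto simp: residuals_def)
  with assms(2) show ?thesis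
    by (auto simp: residuals_def residual_append[symmetric] extendable_iff_residual)
qed

lemma residual_Nil_in_residuals: "residual f [] \<in> residuals f \<longleftrightarrow> residual f [] \<noteq> Map.empty"
  using residual_in_residuals[of "residual f []" f "[]"]
  by (auto simp: residuals_def extendable_iff_residual residual_Nil_residual)

lemma residual_Nil_of_residuals: "g \<in> residuals f \<Longrightarrow> residual g [] = g"
  by (auto simp: residuals_def residual_Nil_residual)

lemma common_output_Nil_of_residuals: "g \<in> residuals f \<Longrightarrow> common_output g [] = []"
  by (auto simp: residuals_def common_output_residual_Nil)

section \<open>Runs\<close>

lemma is_run_Nil_iff: "is_run A p [] q \<longleftrightarrow> p = q"
  by (auto intro: is_run.intros elim: is_run.cases)

lemma is_run_Cons_iff:
  "is_run A p (t # ts) r \<longleftrightarrow> (\<exists>a q. t = (p, a, q) \<and> t \<in> trans A \<and> is_run A q ts r)"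
  by (auto intro: is_run.intros elim: is_run.cases)

lemma is_run_append:
  "is_run A p (ts1 @ ts2) r \<longleftrightarrow> (\<exists>q. is_run A p ts1 q \<and> is_run A q ts2 r)"
proof (induction ts1 arbitrary: p)
  case (Cons t ts1)
  then show ?case by (cases t) (auto simp: is_run_Cons_iff)
qed (simp add: is_run_Nil_iff)

lemma run_label_simps [simp]:
  "run_label [] = []"
  "run_label ((p, a, q) # ts) = a # run_label ts"
  "run_label (ts1 @ ts2) = run_label ts1 @ run_label ts2"
  "length (run_label ts) = length ts"
  "run_label (take k ts) = take k (run_label ts)"
  "run_label (drop k ts) = drop k (run_label ts)"
  by (simp_all add: run_label_def take_map drop_map)

lemma is_run_in_states:
  assumes "wf_aut A" "is_run A p ts q" "p \<in> states A" shows "q \<in> states A"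
  using assms(2,3) by induction (use assms(1) in \<open>auto simp: wf_aut_def\<close>)

lemma is_run_trans: "is_run A p ts q \<Longrightarrow> set ts \<subseteq> trans A"
  by (induction rule: is_run.induct) auto

lemma is_run_split_label:
  assumes "is_run A p ts r" "run_label ts = u @ w"
  obtains ts1 ts2 q where "ts = ts1 @ ts2" "run_label ts1 = u" "run_label ts2 = w"
    "is_run A p ts1 q" "is_run A q ts2 r"
proof -
  let ?k = "length u"
  obtain q where "is_run A p (take ?k ts) q" "is_run A q (drop ?k ts) r"
    using assms(1) is_run_append[of A p "take ?k ts" "drop ?k ts" r] by auto
  moreover have "run_label (take ?k ts) = u" "run_label (drop ?k ts) = w"
    using assms(2) by simp_all
  ultimately show ?thesis using that[of "take ?k ts" "drop ?k ts"] by simp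
qed

lemma deterministic_run_unique:
  assumes "deterministic A" "is_run A p ts q" "is_run A p ts' q'" "run_label ts = run_label ts'"
  shows "ts = ts' \<and> q = q'"
  using assms(2-4)
proof (induction arbitrary: ts' rule: is_run.induct)
  case (run_nil p) then show ?case by (cases ts') (auto simp: is_run_Nil_iff)
next
  case (run_cons p a q ts r)
  then obtain q2 ts2 where "ts' = (p, a, q2) # ts2" "(p, a, q2) \<in> trans A" "is_run A q2 ts2 q'"
    by (cases ts') (auto simp: is_run_Cons_iff)
  moreover from this run_cons.hyps(1) assms(1) have "q2 = q" by (auto simp: deterministic_def)
  ultimately show ?case using run_cons.IH[of ts2] run_cons.prems by auto
qed

definition run_output :: "'a transducer \<Rightarrow> (nat \<times> 'a \<times> nat) list \<Rightarrow> 'a list" where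
  "run_output T ts = concat (map (out T) ts)"

lemma run_output_simps [simp]:
  "run_output T [] = []"
  "run_output T (t # ts) = out T t @ run_output T ts"
  "run_output T (ts1 @ ts2) = run_output T ts1 @ run_output T ts2"
  by (simp_all add: run_output_def)

lemma realized_rel_iff:
  "(w, y) \<in> realized_rel T \<longleftrightarrow> (\<exists>q0 ts qn. q0 \<in> init (aut T) \<and> qn \<in> final (aut T)
     \<and> is_run (aut T) q0 ts qn \<and> run_label ts = w \<and> y = iout T q0 @ run_output T ts @ tout T qn)"
  unfolding realized_rel_def run_output_def by blast

lemma realizes_functional: "realizes T f \<Longrightarrow> functional T"
  unfolding realizes_def functional_def by (metis option.inject)

definition reads :: "'a automaton \<Rightarrow> nat \<Rightarrow> 'a list \<Rightarrow> nat \<Rightarrow> bool" where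
  "reads A p w q \<longleftrightarrow> (\<exists>ts. is_run A p ts q \<and> run_label ts = w)"

definition reads_out :: "'a transducer \<Rightarrow> nat \<Rightarrow> 'a list \<Rightarrow> 'a list \<Rightarrow> nat \<Rightarrow> bool" where
  "reads_out T p w y q \<longleftrightarrow> (\<exists>ts. is_run (aut T) p ts q \<and> run_label ts = w \<and> run_output T ts = y)"

lemma reads_Nil: "reads A p [] p"
  unfolding reads_def by (auto intro: is_run.intros)

lemma reads_append_iff: "reads A p (u @ w) r \<longleftrightarrow> (\<exists>q. reads A p u q \<and> reads A q w r)"
proof
  assume "reads A p (u @ w) r"
  then show "\<exists>q. reads A p u q \<and> reads A q w r"
    unfolding reads_def by (metis is_run_split_label)
next
  assume "\<exists>q. reads A p u q \<and> reads A q w r"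
  then show "reads A p (u @ w) r"
    unfolding reads_def by (metis is_run_append run_label_simps(3))
qed

lemma reads_in_states: "wf_aut A \<Longrightarrow> p \<in> states A \<Longrightarrow> reads A p w q \<Longrightarrow> q \<in> states A"
  unfolding reads_def using is_run_in_states by blast

lemma reads_iff_reads_out: "reads (aut T) p w q \<longleftrightarrow> (\<exists>y. reads_out T p w y q)"
  unfolding reads_def reads_out_def by blast

lemma realized_rel_iff_reads_out:
  "(w, y) \<in> realized_rel T \<longleftrightarrow> (\<exists>q0 y' qf. q0 \<in> init (aut T) \<and> qf \<in> final (aut T)
     \<and> reads_out T q0 w y' qf \<and> y = iout T q0 @ y' @ tout T qf)"
  unfolding realized_rel_iff reads_out_def by blast

lemma reads_out_Nil: "reads_out T p [] [] p"
  unfolding reads_out_def by (auto intro: is_run.intros)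

lemma reads_out_append:
  "reads_out T p u y1 q \<Longrightarrow> reads_out T q w y2 r \<Longrightarrow> reads_out T p (u @ w) (y1 @ y2) r"
proof -
  assume "reads_out T p u y1 q" "reads_out T q w y2 r"
  then obtain ts1 ts2 where "is_run (aut T) p ts1 q" "run_label ts1 = u" "run_output T ts1 = y1"
    "is_run (aut T) q ts2 r" "run_label ts2 = w" "run_output T ts2 = y2"
    unfolding reads_out_def by blast
  then show ?thesis
    unfolding reads_out_def by (intro exI[of _ "ts1 @ ts2"]) (auto simp: is_run_append)
qed

lemma wpow_Suc: "wpow w (Suc n) = w @ wpow w n"
  by (simp add: wpow_def)

lemma wpow_Suc_right: "wpow w (Suc n) = wpow w n @ w"
  by (simp add: wpow_def replicate_append_same[symmetric])

lemma wpow_add: "wpow w (m + n) = wpow w m @ wpow w n"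
  by (simp add: wpow_def replicate_add)

lemma wpow_mult: "wpow w (m * n) = wpow (wpow w m) n"
  by (induction n) (simp_all add: wpow_def replicate_add)

lemma wpow_0 [simp]: "wpow w 0 = []"
  by (simp add: wpow_def)

lemma length_wpow [simp]: "length (wpow w n) = n * length w"
  by (induction n) (simp_all add: wpow_def)

lemma take_wpow: "i \<le> K \<Longrightarrow> take (i * length w) (wpow w K) = wpow w i"
  and drop_wpow: "i \<le> K \<Longrightarrow> drop (i * length w) (wpow w K) = wpow w (K - i)"
  using wpow_add[of w i "K - i"] by simp_all

lemma reads_wpow: "reads A q w q \<Longrightarrow> reads A q (wpow w n) q"
  by (induction n) (auto simp: wpow_Suc reads_Nil reads_append_iff)

lemma reads_out_wpow: "reads_out T q w y q \<Longrightarrow> reads_out T q (wpow w n) (wpow y n) q"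
  by (induction n) (auto simp: wpow_Suc reads_out_Nil reads_out_append)

section \<open>Sequential functions have finitely many residuals\<close>

definition accepts_from :: "'a transducer \<Rightarrow> nat \<Rightarrow> 'a list \<Rightarrow> 'a list \<Rightarrow> bool" where
  "accepts_from T s v y \<longleftrightarrow> (\<exists>ts qf. is_run (aut T) s ts qf \<and> run_label ts = v \<and> qf \<in> final (aut T)
     \<and> y = run_output T ts @ tout T qf)"

definition state_output :: "'a transducer \<Rightarrow> nat \<Rightarrow> 'a list \<Rightarrow> 'a list option" where
  "state_output T s v = (if \<exists>y. accepts_from T s v y then Some (SOME y. accepts_from T s v y) else None)"

lemma state_output_eq_Some_iff:
  assumes "deterministic (aut T)"
  shows "state_output T s v = Some y \<longleftrightarrow> accepts_from T s v y"
proof -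
  have unique: "y = y'" if "accepts_from T s v y" "accepts_from T s v y'" for y y'
    using that deterministic_run_unique[OF assms] unfolding accepts_from_def by metis
  show ?thesis
  proof
    assume "state_output T s v = Some y"
    then show "accepts_from T s v y"
      unfolding state_output_def by (metis option.distinct(1) option.inject someI_ex)
  next
    assume "accepts_from T s v y"
    then show "state_output T s v = Some y"
      unfolding state_output_def using unique by (auto intro: someI2)
  qed
qed

lemma output_after_run:
  assumes det: "deterministic (aut T)" and realizes: "realizes T f"
    and q0: "q0 \<in> init (aut T)" and run: "is_run (aut T) q0 ts s" and label: "run_label ts = u"
  shows "f (u @ v) = map_option ((@) (iout T q0 @ run_output T ts)) (state_output T s v)"
proof (cases "state_output T s v")
  case None
  show ?thesis
  proof (rule ccontr)
    assume "f (u @ v) \<noteq> map_option ((@) (iout T q0 @ run_output T ts)) (state_output T s v)"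
    then obtain y where "(u @ v, y) \<in> realized_rel T"
      using None realizes by (auto simp: realizes_def)
    then obtain q0' ts' qn where acc: "q0' \<in> init (aut T)" "qn \<in> final (aut T)"
      "is_run (aut T) q0' ts' qn" "run_label ts' = u @ v"
      unfolding realized_rel_iff by blast
    have "q0' = q0" using det acc(1) q0 by (auto simp: deterministic_def)
    with acc obtain ts1 ts2 q where split: "run_label ts1 = u" "is_run (aut T) q0 ts1 q"
      "run_label ts2 = v" "is_run (aut T) q ts2 qn"
      by (blast elim: is_run_split_label)
    have "q = s" using deterministic_run_unique[OF det split(2) run] split(1) label by simp
    with split acc(2) have "accepts_from T s v (run_output T ts2 @ tout T qn)"
      unfolding accepts_from_def by blast
    with None show False using state_output_eq_Some_iff[OF det] by (metis option.distinct(1))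
  qed
next
  case (Some y)
  then obtain ts2 qf where acc: "is_run (aut T) s ts2 qf" "run_label ts2 = v" "qf \<in> final (aut T)"
    "y = run_output T ts2 @ tout T qf"
    using state_output_eq_Some_iff[OF det] unfolding accepts_from_def by blast
  then have "is_run (aut T) q0 (ts @ ts2) qf" using run is_run_append by blast
  then have "(u @ v, iout T q0 @ run_output T (ts @ ts2) @ tout T qf) \<in> realized_rel T"
    unfolding realized_rel_iff using q0 acc(2,3) label
    by (intro exI[of _ q0] exI[of _ "ts @ ts2"] exI[of _ qf]) simp
  then show ?thesis using realizes Some acc(4) by (simp add: realizes_def)
qed

lemma finite_residuals:
  assumes "sequential_transduction f" shows "finite (residuals f)"
proof -
  obtain T where T: "wf_aut (aut T)" "deterministic (aut T)" "realizes T f"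
    using assms by (auto simp: sequential_transduction_def)
  have "residuals f \<subseteq> (\<lambda>s. residual (state_output T s) []) ` states (aut T)"
  proof
    fix g assume "g \<in> residuals f"
    then obtain u where u: "extendable f u" "g = residual f u" by (auto simp: residuals_def)
    then obtain v y where "f (u @ v) = Some y" by (auto simp: extendable_def)
    then have "(u @ v, y) \<in> realized_rel T" using T(3) by (simp add: realizes_def)
    then obtain q0 ts qn where "q0 \<in> init (aut T)" "is_run (aut T) q0 ts qn" "run_label ts = u @ v"
      unfolding realized_rel_iff by blast
    then obtain ts1 s where run: "q0 \<in> init (aut T)" "is_run (aut T) q0 ts1 s" "run_label ts1 = u"
      by (blast elim: is_run_split_label)
    then have "s \<in> states (aut T)"
      using T(1) is_run_in_states[OF T(1) run(2)] by (auto simp: wf_aut_def)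
    moreover have "residual f u = residual (state_output T s) []"
      using output_after_run[OF T(2,3) run] by (rule residual_eq_residual_Nil(1))
    ultimately show "g \<in> (\<lambda>s. residual (state_output T s) []) ` states (aut T)" using u by auto
  qed
  moreover have "finite (states (aut T))" using T(1) by (simp add: wf_aut_def)
  ultimately show ?thesis using finite_subset by blast
qed

section \<open>The minimal sequential transducer\<close>

definition canonical_aut :: "('a list \<Rightarrow> 'a list option) \<Rightarrow> (('a list \<Rightarrow> 'a list option) \<Rightarrow> nat) \<Rightarrow> 'a automaton" where
  "canonical_aut f enc = \<lparr>states = enc ` residuals f,
     trans = {(enc g, a, enc (residual g [a])) | g a. g \<in> residuals f \<and> residual g [a] \<noteq> Map.empty},
     init = enc ` (residuals f \<inter> {residual f []}),
     final = enc ` {g \<in> residuals f. g [] \<noteq> None}\<rparr>"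

definition canonical_transducer ::
    "('a list \<Rightarrow> 'a list option) \<Rightarrow> (('a list \<Rightarrow> 'a list option) \<Rightarrow> nat) \<Rightarrow> 'a transducer" where
  "canonical_transducer f enc = \<lparr>aut = canonical_aut f enc,
     out = (\<lambda>(p, a, q). common_output (inv_into (residuals f) enc p) [a]),
     iout = (\<lambda>q. common_output f []),
     tout = (\<lambda>q. the (inv_into (residuals f) enc q []))\<rparr>"

context
  fixes f :: "'a list \<Rightarrow> 'a list option" and enc :: "('a list \<Rightarrow> 'a list option) \<Rightarrow> nat"
  assumes inj: "inj_on enc (residuals f)"
begin

lemma canonical_trans_iff:
  assumes "g \<in> residuals f"
  shows "(enc g, a, q) \<in> trans (canonical_aut f enc) \<longleftrightarrow> residual g [a] \<noteq> Map.empty \<and> q = enc (residual g [a])"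
  using assms inj by (auto simp: canonical_aut_def inj_on_eq_iff)

lemma canonical_run:
  assumes "g \<in> residuals f" "is_run (canonical_aut f enc) (enc g) ts q"
  shows "residual g (run_label ts) \<noteq> Map.empty \<and> q = enc (residual g (run_label ts))
    \<and> run_output (canonical_transducer f enc) ts = common_output g (run_label ts)"
  using assms
proof (induction ts arbitrary: g)
  case Nil
  then show ?case
    by (auto simp: is_run_Nil_iff residual_Nil_of_residuals common_output_Nil_of_residuals residuals_def
      extendable_iff_residual)
next
  case (Cons t ts)
  then obtain a q1 where t: "t = (enc g, a, q1)" "residual g [a] \<noteq> Map.empty"
    "q1 = enc (residual g [a])" "is_run (canonical_aut f enc) q1 ts q"
    by (auto simp: is_run_Cons_iff canonical_trans_iff)
  have "residual g [a] \<in> residuals f" using residual_in_residuals[OF Cons.prems(1) t(2)] .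
  with Cons.IH t have IH: "residual g (a # run_label ts) \<noteq> Map.empty"
    "q = enc (residual g (a # run_label ts))"
    "run_output (canonical_transducer f enc) ts = common_output (residual g [a]) (run_label ts)"
    using residual_append[of g "[a]" "run_label ts"] by auto
  moreover have "out (canonical_transducer f enc) t = common_output g [a]"
    using Cons.prems(1) inj t(1) by (simp add: canonical_transducer_def)
  moreover have "common_output g ([a] @ run_label ts) = common_output g [a] @ common_output (residual g [a]) (run_label ts)"
    using IH(1) by (intro common_output_append) (simp add: extendable_iff_residual)
  ultimately show ?case using t(1) by simp
qed

lemma canonical_run_exists:
  assumes "g \<in> residuals f" "residual g w \<noteq> Map.empty"
  shows "\<exists>ts. is_run (canonical_aut f enc) (enc g) ts (enc (residual g w)) \<and> run_label ts = w"
  using assms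
proof (induction w arbitrary: g)
  case Nil then show ?case by (auto intro: is_run.intros simp: residual_Nil_of_residuals)
next
  case (Cons a w)
  have g_a: "residual (residual g [a]) w = residual g (a # w)"
    using residual_append[of g "[a]" w] by simp
  moreover have a_live: "residual g [a] \<noteq> Map.empty"
    using Cons.prems(2) extendable_appendD[of g "[a]" w] by (simp add: extendable_iff_residual)
  moreover have "residual g [a] \<in> residuals f"
    using Cons.prems(1) a_live by (rule residual_in_residuals)
  ultimately obtain ts where "is_run (canonical_aut f enc) (enc (residual g [a])) ts (enc (residual g (a # w)))"
    "run_label ts = w"
    using Cons.IH Cons.prems(2) by metis
  with Cons.prems(1) a_live show ?case
    by (intro exI[of _ "(enc g, a, enc (residual g [a])) # ts"]) (auto simp: is_run_Cons_iff canonical_trans_iff)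
qed

lemma reads_canonical_iff:
  assumes "g \<in> residuals f"
  shows "reads (canonical_aut f enc) (enc g) w q \<longleftrightarrow> residual g w \<noteq> Map.empty \<and> q = enc (residual g w)"
  using canonical_run[OF assms] canonical_run_exists[OF assms] unfolding reads_def by blast

lemma canonical_output:
  assumes "residual f w \<noteq> Map.empty"
  shows "f w = map_option ((@) (common_output f [] @ common_output (residual f []) w)) (residual f w [])"
proof -
  have "common_output f w = common_output f [] @ common_output (residual f []) w"
    using common_output_append[of f "[]" w] assms by (simp add: extendable_iff_residual)
  then show ?thesis using output_eq_common_output_residual[of f w "[]"] by simp
qed

lemma canonical_accepts_only_graph:
  assumes "(w, y) \<in> realized_rel (canonical_transducer f enc)"
  shows "f w = Some y"
proof -
  let ?T = "canonical_transducer f enc" and ?g0 = "residual f []"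
  obtain q0 ts qn where acc: "q0 \<in> init (canonical_aut f enc)" "qn \<in> final (canonical_aut f enc)"
    "is_run (canonical_aut f enc) q0 ts qn" "run_label ts = w" "y = common_output f [] @ run_output ?T ts @ tout ?T qn"
    using assms unfolding realized_rel_iff by (auto simp: canonical_transducer_def)
  then have g0: "?g0 \<in> residuals f" "q0 = enc ?g0" by (auto simp: canonical_aut_def)
  with acc canonical_run[OF g0(1)] have run: "residual f w \<noteq> Map.empty" "qn = enc (residual f w)"
    "run_output ?T ts = common_output ?g0 w"
    by (auto simp: residual_append[symmetric])
  from acc(2) obtain g where g: "g \<in> residuals f" "g [] \<noteq> None" "qn = enc g"
    by (auto simp: canonical_aut_def)
  have "residual f w \<in> residuals f"
    using residual_in_residuals[OF g0(1), of w] run(1) by (simp add: residual_append[symmetric])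
  with g run(2) inj have "g = residual f w" by (simp add: inj_on_eq_iff)
  then show "f w = Some y"
    using canonical_output[OF run(1)] acc(5) run g inj by (auto simp: canonical_transducer_def)
qed

lemma canonical_accepts_graph:
  assumes "f w = Some y"
  shows "(w, y) \<in> realized_rel (canonical_transducer f enc)"
proof -
  let ?T = "canonical_transducer f enc" and ?g0 = "residual f []"
  have live: "residual f w \<noteq> Map.empty" "?g0 \<noteq> Map.empty"
    using assms by (auto simp: extendable_iff_residual[symmetric] extendable_def intro: exI[of _ "[]"])
  then have g0: "?g0 \<in> residuals f" by (simp add: residual_Nil_in_residuals)
  have gw: "residual f w \<in> residuals f"
    using residual_in_residuals[OF g0, of w] live(1) by (simp add: residual_append[symmetric])
  obtain ts where ts: "is_run (canonical_aut f enc) (enc ?g0) ts (enc (residual f w))" "run_label ts = w"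
    using canonical_run_exists[OF g0, of w] live(1) by (auto simp: residual_append[symmetric])
  obtain z where z: "residual f w [] = Some z" "y = common_output f [] @ common_output ?g0 w @ z"
    using canonical_output[OF live(1)] assms by (cases "residual f w []") auto
  have "y = iout ?T (enc ?g0) @ run_output ?T ts @ tout ?T (enc (residual f w))"
    using canonical_run[OF g0 ts(1)] ts(2) z gw inj by (simp add: canonical_transducer_def residual_append[symmetric])
  moreover have "enc ?g0 \<in> init (aut ?T)" "enc (residual f w) \<in> final (aut ?T)"
    using g0 gw z(1) by (auto simp: canonical_transducer_def canonical_aut_def)
  ultimately show ?thesis
    unfolding realized_rel_iff using ts by (auto simp: canonical_transducer_def)
qed

lemma canonical_realizes: "realizes (canonical_transducer f enc) f"
  using canonical_accepts_only_graph canonical_accepts_graph unfolding realizes_def by blast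

lemma canonical_deterministic: "deterministic (aut (canonical_transducer f enc))"
  using inj by (auto simp: deterministic_def canonical_transducer_def canonical_aut_def inj_on_eq_iff)

lemma canonical_wf: "finite (residuals f) \<Longrightarrow> wf_aut (aut (canonical_transducer f enc))"
  by (auto simp: wf_aut_def canonical_transducer_def canonical_aut_def intro: residual_in_residuals)

lemma canonical_aperiodic:
  assumes "\<And>g z. g \<in> residuals f \<Longrightarrow> residual g (wpow z K) = residual g (wpow z (Suc K))"
  shows "aperiodic_aut (aut (canonical_transducer f enc))"
  unfolding aperiodic_aut_def aperiodic_rel_def
proof (intro exI allI)
  fix z
  have "reads (canonical_aut f enc) p (wpow z K) q \<longleftrightarrow> reads (canonical_aut f enc) p (wpow z (Suc K)) q"
    if p: "p \<in> states (canonical_aut f enc)" for p q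
  proof -
    obtain g where "g \<in> residuals f" "p = enc g" using p by (auto simp: canonical_aut_def)
    then show ?thesis using assms reads_canonical_iff by simp
  qed
  then show "trans_cong (aut (canonical_transducer f enc)) (wpow z K) (wpow z (Suc K))"
    by (simp add: trans_cong_def reads_def canonical_transducer_def)
qed

end

section \<open>Pumping in aperiodic transducers\<close>

definition run_end :: "nat \<Rightarrow> (nat \<times> 'a \<times> nat) list \<Rightarrow> nat" where
  "run_end p ts = last (p # map (snd \<circ> snd) ts)"

lemma is_run_end: "is_run A p ts r \<Longrightarrow> r = run_end p ts"
  by (induction rule: is_run.induct) (simp_all add: run_end_def)

lemma is_run_take_drop:
  assumes "is_run A p ts r"
  shows "is_run A p (take k ts) (run_end p (take k ts))" "is_run A (run_end p (take k ts)) (drop k ts) r"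
proof -
  obtain q where "is_run A p (take k ts) q" "is_run A q (drop k ts) r"
    using assms is_run_append[of A p "take k ts" "drop k ts" r] by auto
  with is_run_end show "is_run A p (take k ts) (run_end p (take k ts))"
    "is_run A (run_end p (take k ts)) (drop k ts) r" by metis+
qed

text \<open>Pigeonhole on the states reached after each block \<open>W\<close> of one run on \<open>W\<^sup>K\<close>.\<close>

lemma reads_wpow_loop:
  assumes "wf_aut A" "p \<in> states A" "reads A p (wpow W K) q" "card (states A) \<le> K"
  shows "\<exists>i j s. i < j \<and> j \<le> K \<and> reads A p (wpow W i) s \<and> reads A s (wpow W (j - i)) s
    \<and> reads A s (wpow W (K - j)) q"
proof -
  obtain ts where run: "is_run A p ts q" "run_label ts = wpow W K" using assms(3) by (auto simp: reads_def)
  define st where "st k = run_end p (take (k * length W) ts)" for k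
  have run_st: "is_run A p (take (k * length W) ts) (st k)" for k
    unfolding st_def using is_run_take_drop(1)[OF run(1)] .
  have "st ` {0..card (states A)} \<subseteq> states A"
    using run_st is_run_in_states[OF assms(1) _ assms(2)] by blast
  then have "card (st ` {0..card (states A)}) \<le> card (states A)"
    using assms(1) by (intro card_mono) (auto simp: wf_aut_def)
  then have "\<not> inj_on st {0..card (states A)}" using pigeonhole[of st] by simp
  then obtain i j where ij: "i < j" "j \<le> card (states A)" "st i = st j"
    unfolding inj_on_def by (metis atLeastAtMost_iff linorder_neqE_nat)
  have label_take: "run_label (take (k * length W) ts) = wpow W k" if "k \<le> K" for k
    using run(2) take_wpow[OF that] by simp
  have "reads A p (wpow W i) (st i)"
    unfolding reads_def using run_st[of i] label_take[of i] ij assms(4)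
    by (intro exI[of _ "take (i * length W) ts"]) simp
  moreover have "reads A (st i) (wpow W (j - i)) (st j)"
  proof -
    have "is_run A (st i) (drop (i * length W) (take (j * length W) ts)) (st j)"
      using is_run_take_drop(2)[OF run_st[of j], of "i * length W"] ij(1) by (simp add: st_def min_def)
    moreover have "run_label (drop (i * length W) (take (j * length W) ts)) = wpow W (j - i)"
      using label_take[of j] drop_wpow[of i j W] ij assms(4) by simp
    ultimately show ?thesis unfolding reads_def by blast
  qed
  moreover have "reads A (st j) (wpow W (K - j)) q"
  proof -
    have "is_run A (st j) (drop (j * length W) ts) q"
      unfolding st_def by (rule is_run_take_drop(2)[OF run(1)])
    moreover have "run_label (drop (j * length W) ts) = wpow W (K - j)"
      using run(2) drop_wpow[of j K W] ij assms(4) by simp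
    ultimately show ?thesis unfolding reads_def by blast
  qed
  ultimately show ?thesis using ij assms(4) by (intro exI[of _ i] exI[of _ j] exI[of _ "st j"]) simp
qed

locale aperiodic_realizer =
  fixes T :: "'a::finite transducer" and f :: "'a list \<Rightarrow> 'a list option" and N :: nat
  assumes wf: "wf_aut (aut T)"
    and aperiodic: "\<And>w. trans_cong (aut T) (wpow w N) (wpow w (Suc N))"
    and realizes: "realizes T f"
begin

abbreviation "Q \<equiv> states (aut T)"

lemma reads_wpow_Suc:
  assumes "N \<le> n" "p \<in> Q" "reads (aut T) p (wpow w n) q"
  shows "reads (aut T) p (wpow w (Suc n)) q"
proof -
  obtain q' where q': "reads (aut T) p (wpow w N) q'" "reads (aut T) q' (wpow w (n - N)) q"
    using assms(1,3) wpow_add[of w N "n - N"] reads_append_iff by (metis le_add_diff_inverse)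
  have "reads (aut T) p (wpow w (Suc N)) q'"
    using aperiodic[of w] assms(2) q'(1) reads_in_states[OF wf assms(2) q'(1)]
    unfolding trans_cong_def reads_def by blast
  with q'(2) have "reads (aut T) p (wpow w (Suc N) @ wpow w (n - N)) q"
    using reads_append_iff by blast
  then show ?thesis using assms(1) by (simp add: wpow_add[symmetric])
qed

lemma reads_loop_Suc:
  assumes "q \<in> Q" "reads (aut T) q (wpow z d) q" "0 < d"
  shows "reads (aut T) q (wpow z (Suc (d * N))) q"
proof -
  have "reads (aut T) q (wpow z (d * N)) q"
    using reads_wpow[OF assms(2)] by (simp add: wpow_mult)
  then show ?thesis using reads_wpow_Suc assms(1,3) by simp
qed

lemma accepting_loop:
  assumes "0 < p" "card Q \<le> c" "f (x @ wpow z (b + c * p) @ v) \<noteq> None"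
  obtains q0 qf s i r where "q0 \<in> init (aut T)" "qf \<in> final (aut T)" "i \<le> card Q"
    "reads (aut T) q0 (x @ wpow z (b + p * i)) s" "reads (aut T) s (wpow z (1 + p * r)) s"
    "reads (aut T) s (wpow z (p * (c - i)) @ v) qf"
proof -
  let ?K = "card Q" and ?W = "wpow z p"
  obtain y where "(x @ wpow z (b + c * p) @ v, y) \<in> realized_rel T"
    using assms(3) realizes by (auto simp: realizes_def)
  then obtain q0 qf where q0: "q0 \<in> init (aut T)" "qf \<in> final (aut T)"
    "reads (aut T) q0 (x @ wpow z (b + c * p) @ v) qf"
    unfolding realized_rel_iff_reads_out reads_iff_reads_out by blast
  have "b + c * p = b + p * ?K + p * (c - ?K)"
    using assms(2) by (simp add: add_mult_distrib2[symmetric])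
  then have "x @ wpow z (b + c * p) @ v = (x @ wpow z b) @ wpow ?W ?K @ (wpow z (p * (c - ?K)) @ v)"
    by (simp only: wpow_add wpow_mult append_assoc)
  then obtain qa qb where q: "reads (aut T) q0 (x @ wpow z b) qa" "reads (aut T) qa (wpow ?W ?K) qb"
    "reads (aut T) qb (wpow z (p * (c - ?K)) @ v) qf"
    using q0(3) by (auto simp: reads_append_iff)
  have "q0 \<in> Q" using q0(1) wf by (auto simp: wf_aut_def)
  then have qa: "qa \<in> Q" using reads_in_states[OF wf _ q(1)] by blast
  obtain i j s where ij: "i < j" "j \<le> ?K" "reads (aut T) qa (wpow ?W i) s"
    "reads (aut T) s (wpow ?W (j - i)) s" "reads (aut T) s (wpow ?W (?K - j)) qb"
    using reads_wpow_loop[OF wf qa q(2)] by auto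
  have "s \<in> Q" using reads_in_states[OF wf qa ij(3)] .
  moreover have "reads (aut T) s (wpow z (p * (j - i))) s" using ij(4) by (simp add: wpow_mult)
  ultimately have "reads (aut T) s (wpow z (1 + p * ((j - i) * N))) s"
    using reads_loop_Suc[of s z "p * (j - i)"] assms(1) ij(1) by (simp add: mult.assoc)
  moreover have "reads (aut T) q0 (x @ wpow z (b + p * i)) s"
    using q(1) ij(3) unfolding wpow_add wpow_mult append_assoc[symmetric] reads_append_iff by blast
  moreover have "p * (c - i) = p * (j - i) + p * (?K - j) + p * (c - ?K)"
    using ij(1,2) assms(2) by (simp add: add_mult_distrib2[symmetric])
  then have "wpow z (p * (c - i)) @ v = wpow ?W (j - i) @ wpow ?W (?K - j) @ wpow z (p * (c - ?K)) @ v"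
    by (simp only: wpow_add wpow_mult append_assoc)
  then have "reads (aut T) s (wpow z (p * (c - i)) @ v) qf"
    using ij(4,5) q(3) by (auto simp: reads_append_iff)
  ultimately show ?thesis using that[of q0 qf i s "(j - i) * N"] q0(1,2) ij(1,2) by simp
qed

definition max_iout :: nat where
  "max_iout = Max (insert 0 (length ` iout T ` init (aut T)))"

definition max_out :: nat where
  "max_out = Max (insert 0 (length ` out T ` trans (aut T)))"

lemma length_iout_le: "q \<in> init (aut T) \<Longrightarrow> length (iout T q) \<le> max_iout"
proof -
  have "finite (init (aut T))" using wf finite_subset by (auto simp: wf_aut_def)
  then show "q \<in> init (aut T) \<Longrightarrow> length (iout T q) \<le> max_iout"
    unfolding max_iout_def by (intro Max_ge) auto
qed

lemma length_out_le: "t \<in> trans (aut T) \<Longrightarrow> length (out T t) \<le> max_out"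
proof -
  have "finite (Q \<times> (UNIV :: 'a set) \<times> Q)" using wf by (simp add: wf_aut_def)
  then have "finite (trans (aut T))"
    using wf finite_subset[of "trans (aut T)" "Q \<times> UNIV \<times> Q"] by (simp add: wf_aut_def)
  then show "t \<in> trans (aut T) \<Longrightarrow> length (out T t) \<le> max_out"
    unfolding max_out_def by (intro Max_ge) auto
qed

lemma reads_out_length_le:
  assumes "reads_out T p w y q" shows "length y \<le> max_out * length w"
proof -
  obtain ts where ts: "is_run (aut T) p ts q" "run_label ts = w" "run_output T ts = y"
    using assms by (auto simp: reads_out_def)
  have "set ts \<subseteq> trans (aut T)" using ts(1) by (rule is_run_trans)
  then have "length (run_output T ts) \<le> max_out * length ts"
    by (induction ts) (auto simp: length_out_le add_mono)
  then show ?thesis using ts(2,3) by (metis run_label_simps(4))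
qed

text \<open>The bound on \<open>A\<close> does not depend on \<open>c\<close>; this is what allows \<open>c\<close> to be chosen
  large enough later on.\<close>

lemma pumping:
  assumes "0 < p" "card Q \<le> c" "f (x @ wpow z (b + c * p) @ v) \<noteq> None"
  obtains A E C r where "length A \<le> max_iout + max_out * (length x + (b + card Q * p) * length z)"
    "\<And>s. f (x @ wpow z (b + c * p + s * (1 + p * r)) @ v) = Some (A @ wpow E s @ C)"
proof -
  obtain q0 qf s i r where loop: "q0 \<in> init (aut T)" "qf \<in> final (aut T)" "i \<le> card Q"
    "reads (aut T) q0 (x @ wpow z (b + p * i)) s" "reads (aut T) s (wpow z (1 + p * r)) s"
    "reads (aut T) s (wpow z (p * (c - i)) @ v) qf"
    using accepting_loop[OF assms] by metis
  obtain y1 E y3 where y: "reads_out T q0 (x @ wpow z (b + p * i)) y1 s"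
    "reads_out T s (wpow z (1 + p * r)) E s" "reads_out T s (wpow z (p * (c - i)) @ v) y3 qf"
    using loop(4-6) unfolding reads_iff_reads_out by blast
  have pumped: "f (x @ wpow z (b + c * p + n * (1 + p * r)) @ v) = Some ((iout T q0 @ y1) @ wpow E n @ (y3 @ tout T qf))"
    for n
  proof -
    obtain k where "c = i + k" using loop(3) assms(2) le_Suc_ex[of i c] by auto
    then have "p * i + p * (c - i) = c * p" by (simp add: algebra_simps)
    then have "b + c * p + n * (1 + p * r) = (b + p * i) + (1 + p * r) * n + p * (c - i)"
      by (simp add: algebra_simps)
    then have "x @ wpow z (b + c * p + n * (1 + p * r)) @ v
        = (x @ wpow z (b + p * i)) @ wpow (wpow z (1 + p * r)) n @ (wpow z (p * (c - i)) @ v)"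
      by (simp only: wpow_add wpow_mult append_assoc)
    then have "reads_out T q0 (x @ wpow z (b + c * p + n * (1 + p * r)) @ v) (y1 @ wpow E n @ y3) qf"
      using reads_out_append[OF y(1) reads_out_append[OF reads_out_wpow[OF y(2)] y(3)]] by simp
    then have "(x @ wpow z (b + c * p + n * (1 + p * r)) @ v, (iout T q0 @ y1) @ wpow E n @ (y3 @ tout T qf))
        \<in> realized_rel T"
      unfolding realized_rel_iff_reads_out using loop(1,2)
      by (intro exI[of _ q0] exI[of _ "y1 @ wpow E n @ y3"] exI[of _ qf]) simp
    then show ?thesis using realizes by (simp add: realizes_def)
  qed
  have bound: "length (iout T q0 @ y1) \<le> max_iout + max_out * (length x + (b + card Q * p) * length z)"
  proof -
    have "length x + (b + p * i) * length z \<le> length x + (b + card Q * p) * length z"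
      using loop(3) by (intro add_left_mono mult_right_mono) auto
    then have "length y1 \<le> max_out * (length x + (b + card Q * p) * length z)"
      using reads_out_length_le[OF y(1)] by (simp add: order_trans)
    then show ?thesis using length_iout_le[OF loop(1)] by simp
  qed
  show ?thesis by (rule that[OF bound pumped])
qed

end

section \<open>Residuals along the powers of a word\<close>

lemma eventually_periodic_mult:
  fixes h :: "nat \<Rightarrow> 'b"
  assumes "\<And>j. a \<le> j \<Longrightarrow> h (j + p) = h j" "a \<le> j"
  shows "h (j + p * t) = h j"
proof (induction t)
  case (Suc t)
  have "h (j + p * Suc t) = h (j + p * t + p)" by (simp add: algebra_simps)
  also have "\<dots> = h (j + p * t)" using assms by simp
  also have "\<dots> = h j" by (rule Suc.IH)
  finally show ?case .
qed simp

lemma eventually_periodic_mod: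
  fixes h :: "nat \<Rightarrow> 'b"
  assumes "\<And>j. a \<le> j \<Longrightarrow> h (j + p) = h j" "a \<le> j"
  shows "h j = h (a + (j - a) mod p)"
proof -
  have "j = (a + (j - a) mod p) + p * ((j - a) div p)" using assms(2) by simp
  then show ?thesis
    using eventually_periodic_mult[of a h p "a + (j - a) mod p" "(j - a) div p", OF assms(1)] by simp
qed

lemma iterate_eventually_periodic:
  fixes h :: "nat \<Rightarrow> 'b"
  assumes "finite S" "\<And>j. h j \<in> S" "\<And>j. h (Suc j) = F (h j)"
  obtains a p where "0 < p" "a + p \<le> card S" "\<And>j. a \<le> j \<Longrightarrow> h (j + p) = h j"
proof -
  have "card (h ` {0..card S}) \<le> card S" using assms(1,2) by (intro card_mono) auto
  then have "\<not> inj_on h {0..card S}" using pigeonhole[of h "{0..card S}"] by simp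
  then obtain i j where "i \<le> card S" "j \<le> card S" "i \<noteq> j" "h i = h j"
    unfolding inj_on_def by auto
  then obtain a b where ab: "a < b" "b \<le> card S" "h a = h b"
    by (cases "i < j") (auto simp: not_less_iff_gr_or_eq)
  have shift: "h (a + k) = h (b + k)" for k
    by (induction k) (simp_all add: ab assms(3))
  have "h (j + (b - a)) = h j" if "a \<le> j" for j
    using shift[of "j - a"] that ab(1) by (simp add: add.commute)
  with ab show ?thesis using that[of "b - a" a] by simp
qed

lemma iterate_stable_from_card:
  fixes h :: "nat \<Rightarrow> 'b"
  assumes "finite S" "\<And>j. h j \<in> S" "\<And>j. h (Suc j) = F (h j)"
    and "\<And>j. n \<le> j \<Longrightarrow> h (Suc j) = h j"
  shows "h (Suc (card S)) = h (card S)"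
proof -
  obtain a p where ap: "0 < p" "a + p \<le> card S" "\<And>j. a \<le> j \<Longrightarrow> h (j + p) = h j"
    using iterate_eventually_periodic[of S h F] assms(1-3) by metis
  have const: "h j = h n" if "n \<le> j" for j
    using that
  proof (induction j rule: dec_induct)
    case (step j)
    then show ?case using assms(4)[of j] by simp
  qed simp
  have to_const: "h j = h n" if "a \<le> j" for j
  proof -
    have "h j = h (j + p * n)" using eventually_periodic_mult[of a h p, OF ap(3) that] by simp
    also have "\<dots> = h n" using ap(1) by (intro const) (simp add: trans_le_add2)
    finally show ?thesis .
  qed
  have "a \<le> card S" using ap(2) by simp
  then show ?thesis using to_const[of "card S"] to_const[of "Suc (card S)"] by simp
qed

locale periodic_powers = aperiodic_realizer +
  fixes x z :: "'a list" and n0 p :: nat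
  assumes period_pos: "0 < p"
    and periodic: "\<And>j. n0 \<le> j \<Longrightarrow> residual f (x @ wpow z (j + p)) = residual f (x @ wpow z j)"
begin

definition res :: "nat \<Rightarrow> 'a list \<Rightarrow> 'a list option" where
  "res j = residual f (x @ wpow z j)"

definition common :: "nat \<Rightarrow> 'a list" where
  "common j = common_output f (x @ wpow z j)"

lemma output_eq_common_res: "f (x @ wpow z j @ v) = map_option ((@) (common j)) (res j v)"
  using output_eq_common_output_residual[of f "x @ wpow z j" v] by (simp add: res_def common_def)

lemma res_Suc: "res (Suc j) = residual (res j) z"
  by (simp add: res_def residual_append[symmetric] wpow_Suc_right)

lemma res_Cons_z: "res j (z @ v) = map_option ((@) (common_output (res j) z)) (res (Suc j) v)"
  using output_eq_common_output_residual[of "res j" z v] by (simp add: res_Suc)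

lemma res_periodic: "n0 \<le> j \<Longrightarrow> res (j + p) = res j"
  unfolding res_def by (rule periodic)

lemma res_periodic_mult: "n0 \<le> j \<Longrightarrow> res (j + p * t) = res j"
  using res_periodic by (rule eventually_periodic_mult)

lemma res_periodic_mod: "n0 \<le> a \<Longrightarrow> a \<le> j \<Longrightarrow> res j = res (a + (j - a) mod p)"
  using res_periodic by (intro eventually_periodic_mod) auto

lemma res_dom_mono:
  assumes "n0 \<le> b" "res b v \<noteq> None"
  shows "res (b + s) v \<noteq> None"
proof -
  let ?K = "card Q"
  have "f (x @ wpow z (b + ?K * p) @ v) \<noteq> None"
    using assms res_periodic_mult[of b ?K] output_eq_common_res by (simp add: mult.commute)
  then obtain A E C r where "\<And>s. f (x @ wpow z (b + ?K * p + s * (1 + p * r)) @ v) = Some (A @ wpow E s @ C)"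
    using pumping[OF period_pos order.refl] by metis
  then have "res (b + ?K * p + s * (1 + p * r)) v \<noteq> None"
    using output_eq_common_res by (metis option.distinct(1) option.map_disc_iff)
  moreover have "b + ?K * p + s * (1 + p * r) = (b + s) + p * (?K + s * r)"
    by (simp add: algebra_simps)
  ultimately show ?thesis using res_periodic_mult[of "b + s" "?K + s * r"] assms(1) by (simp only:) simp
qed

lemma res_dom_stable:
  assumes "n0 \<le> n" "n \<le> j"
  shows "res j v = None \<longleftrightarrow> res n v = None"
proof
  assume "res j v = None"
  then show "res n v = None"
    using res_dom_mono[OF assms(1), of v "j - n"] assms(2) by (metis le_add_diff_inverse)
next
  assume none: "res n v = None"
  have "j + (p - 1) * (j - n) = n + p * (j - n)"
  proof -
    obtain k q where "j = n + k" "p = Suc q" using assms(2) period_pos le_Suc_ex not0_implies_Suc by blast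
    then show ?thesis by (simp add: algebra_simps)
  qed
  then have "res (j + (p - 1) * (j - n)) = res n"
    using res_periodic_mult[OF assms(1)] by simp
  then show "res j v = None"
    using res_dom_mono[of j v "(p - 1) * (j - n)"] none assms by (metis order_trans)
qed

end

locale live_periodic_powers = periodic_powers +
  fixes n :: nat and v0 :: "'a list"
  assumes n0_le: "n0 \<le> n" and live: "res n v0 \<noteq> None"
begin

lemma dom_stable: "n \<le> j \<Longrightarrow> res j v = None \<longleftrightarrow> res n v = None"
  using res_dom_stable[OF n0_le] .

lemma extendable_pow: "n \<le> j \<Longrightarrow> extendable f (x @ wpow z j)"
  using dom_stable[of j v0] live by (auto simp: extendable_iff_residual res_def)

lemma common_output_res_Nil: "n \<le> j \<Longrightarrow> common_output (res j) [] = []"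
  by (simp add: res_def common_output_residual_Nil extendable_pow)

lemma common_Suc: "n \<le> j \<Longrightarrow> common (Suc j) = common j @ common_output (res j) z"
  using common_output_append[of f "x @ wpow z j" z] extendable_pow[of "Suc j"]
  by (simp add: common_def res_def wpow_Suc_right)

lemma common_prefix: "n \<le> j \<Longrightarrow> prefix (common j) (common (j + k))"
  by (induction k) (auto simp: common_Suc intro: prefix_order.trans)

definition growth :: nat where
  "growth = length (common (n + p)) - length (common n)"

lemma length_common_periodic: "n \<le> j \<Longrightarrow> length (common (j + p)) = length (common j) + growth"
proof (induction j rule: dec_induct)
  case base
  show ?case using prefix_length_le[OF common_prefix[of n p]] by (simp add: growth_def)
next
  case (step j)
  have "res (j + p) = res j" using res_periodic n0_le step.hyps(1) by simp
  then show ?case using step common_Suc[of j] common_Suc[of "j + p"] by simp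
qed

lemma length_common_periodic_mult: "n \<le> j \<Longrightarrow> length (common (j + p * t)) = length (common j) + t * growth"
proof (induction t)
  case (Suc t)
  have "length (common (j + p * Suc t)) = length (common (j + p * t + p))"
    by (simp add: algebra_simps)
  then show ?case using Suc length_common_periodic[of "j + p * t"] by simp
qed simp


lemma pumped_decomposition:
  assumes "res n v \<noteq> None"
  obtains A E C r c where "length A + growth \<le> c" "p * length E = growth + p * r * growth"
    "\<And>s. A @ wpow E s @ C = common (n + c * p + s * (1 + p * r)) @ the (res (n + s) v)"
    "\<And>s. length (common (n + c * p + s * (1 + p * r))) = length (common (n + s)) + (c + s * r) * growth"
proof -
  define c where "c = card Q + max_iout + max_out * (length x + (n + card Q * p) * length z) + growth"
  have "res (n + c * p) = res n" using res_periodic_mult[OF n0_le, of c] by (simp add: mult.commute)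
  then have defined: "f (x @ wpow z (n + c * p) @ v) \<noteq> None" using assms output_eq_common_res by simp
  have "card Q \<le> c" by (simp add: c_def)
  then obtain A E C r where bound: "length A \<le> max_iout + max_out * (length x + (n + card Q * p) * length z)"
    and pumped: "\<And>s. f (x @ wpow z (n + c * p + s * (1 + p * r)) @ v) = Some (A @ wpow E s @ C)"
    using pumping[OF period_pos _ defined] by metis
  have index: "n + c * p + s * (1 + p * r) = (n + s) + p * (c + s * r)" for s
    by (simp add: algebra_simps)
  have decomp: "A @ wpow E s @ C = common (n + c * p + s * (1 + p * r)) @ the (res (n + s) v)" for s
  proof -
    have "res (n + c * p + s * (1 + p * r)) = res (n + s)"
      unfolding index using n0_le by (intro res_periodic_mult) simp
    moreover have "res (n + s) v \<noteq> None" using dom_stable[of "n + s" v] assms by simp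
    ultimately show ?thesis using pumped[of s] output_eq_common_res[of "n + c * p + s * (1 + p * r)" v] by auto
  qed
  have length_common: "length (common (n + c * p + s * (1 + p * r))) = length (common (n + s)) + (c + s * r) * growth" for s
    unfolding index by (rule length_common_periodic_mult) simp
  have "p * length E = growth + p * r * growth"
  proof -
    have "res (n + p) v = res n v" using res_periodic n0_le by simp
    moreover have "length (common (n + p)) = length (common n) + growth" by (rule length_common_periodic) simp
    ultimately show ?thesis
      using arg_cong[OF decomp[of 0], of length] arg_cong[OF decomp[of p], of length]
        length_common[of 0] length_common[of p] by (simp add: algebra_simps)
  qed
  moreover have "length A + growth \<le> c" using bound by (simp add: c_def)
  ultimately show ?thesis using that decomp length_common by blast
qed


lemma length_shift:
  assumes "res n v = Some g0" "res (n + s) v = Some g"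
  shows "int p * (int (length g) - int (length g0))
    = int s * int growth - int p * (int (length (common (n + s))) - int (length (common n)))"
proof -
  obtain A E C r c where pE: "p * length E = growth + p * r * growth"
    and decomp: "\<And>s. A @ wpow E s @ C = common (n + c * p + s * (1 + p * r)) @ the (res (n + s) v)"
    and length_common: "\<And>s. length (common (n + c * p + s * (1 + p * r))) = length (common (n + s)) + (c + s * r) * growth"
    using pumped_decomposition[of v] assms(1) by (metis option.distinct(1))
  have "length A + s * length E + length C = length (common (n + s)) + (c + s * r) * growth + length g"
    using arg_cong[OF decomp[of s], of length] length_common[of s] assms(2) by simp
  then have h1: "int (length A + s * length E + length C) = int (length (common (n + s)) + (c + s * r) * growth + length g)"
    by (rule arg_cong)
  have "length A + length C = length (common n) + c * growth + length g0"
    using arg_cong[OF decomp[of 0], of length] length_common[of 0] assms(1) by simp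
  then have h2: "int (length A + length C) = int (length (common n) + c * growth + length g0)"
    by (rule arg_cong)
  have h3: "int (p * length E) = int (growth + p * r * growth)" using pE by (rule arg_cong)
  show ?thesis using h1 h2 h3 unfolding of_nat_add of_nat_mult by algebra
qed

lemma common_suffix:
  assumes "res n v \<noteq> None"
  obtains D where "\<And>s. s < p \<Longrightarrow> suffix (the (res (n + s) v)) D"
proof -
  obtain A E C r c where bound: "length A + growth \<le> c" and pE: "p * length E = growth + p * r * growth"
    and decomp: "\<And>s. A @ wpow E s @ C = common (n + c * p + s * (1 + p * r)) @ the (res (n + s) v)"
    and length_common: "\<And>s. length (common (n + c * p + s * (1 + p * r))) = length (common (n + s)) + (c + s * r) * growth"
    using pumped_decomposition[OF assms] by metis
  show ?thesis
  proof (cases "growth = 0")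
    case True
    then have "E = []" using pE period_pos by simp
    then have "suffix (the (res (n + s) v)) (A @ C)" for s
      using decomp[of s] by (auto simp: suffix_def wpow_def)
    then show ?thesis using that by blast
  next
    case False
    have "suffix (the (res (n + s) v)) C" if "s < p" for s
    proof (rule suffix_of_append_eq)
      show "(A @ wpow E s) @ C = common (n + c * p + s * (1 + p * r)) @ the (res (n + s) v)"
        using decomp[of s] by simp
      have "p * (length A + s * length E) = p * length A + s * growth + s * (p * r * growth)"
        using arg_cong[OF pE, of "\<lambda>m. s * m"] by (simp add: algebra_simps)
      also have "\<dots> \<le> p * (c - growth) + p * growth + s * (p * r * growth)"
        using bound that by (intro add_mono mult_le_mono) auto
      also have "\<dots> \<le> p * (c * growth) + s * (p * r * growth)"
        using bound False by (simp add: add_mult_distrib2[symmetric])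
      also have "\<dots> \<le> p * (length (common (n + s)) + (c + s * r) * growth)"
        by (simp add: algebra_simps)
      finally show "length (A @ wpow E s) \<le> length (common (n + c * p + s * (1 + p * r)))"
        using length_common[of s] period_pos by simp
    qed
    then show ?thesis using that by blast
  qed
qed


lemma res_reduce: "n \<le> j \<Longrightarrow> res j = res (n + (j - n) mod p)"
  using res_periodic_mod[OF n0_le] .

lemma suffix_comparable:
  assumes "n \<le> j" "n \<le> j'" "res j v = Some g" "res j' v = Some g'" "length g \<le> length g'"
  shows "suffix g g'"
proof -
  have "res n v \<noteq> None" using dom_stable[OF assms(1), of v] assms(3) by auto
  then obtain D where D: "\<And>s. s < p \<Longrightarrow> suffix (the (res (n + s) v)) D"
    using common_suffix by metis
  have "suffix g D" "suffix g' D"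
    using D[of "(j - n) mod p"] D[of "(j' - n) mod p"] res_reduce[OF assms(1)] res_reduce[OF assms(2)]
      assms(3,4) period_pos by simp_all
  then show ?thesis using assms(5) suffix_length_suffix by blast
qed

definition shift :: "nat \<Rightarrow> int" where
  "shift j = int (length (the (res j v0))) - int (length (the (res n v0)))"

lemma shift_eq:
  assumes "n \<le> j" "res j v = Some g" "res n v = Some g0"
  shows "int (length g) - int (length g0) = shift j"
proof -
  define s where "s = (j - n) mod p"
  have j: "res j = res (n + s)" unfolding s_def using assms(1) by (rule res_reduce)
  obtain g' g0' where v0: "res j v0 = Some g'" "res n v0 = Some g0'"
    using live dom_stable[OF assms(1), of v0] by auto
  have "int p * (int (length g) - int (length g0)) = int p * shift j"
    using length_shift[OF assms(3), of s g] length_shift[OF v0(2), of s g'] j assms(2) v0(1)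
    by (simp add: shift_def v0(2))
  then show ?thesis using period_pos by simp
qed

text \<open>At a position of minimal shift the next residual can only prepend a word \<open>P\<close> to every
  output; comparing with the outputs on \<open>z v\<close> one step earlier shows that \<open>P\<close> does not
  depend on \<open>v\<close>.\<close>

lemma res_Suc_prepend:
  assumes "Suc n \<le> i" "\<And>j. n \<le> j \<Longrightarrow> shift i \<le> shift j"
  obtains P where "\<And>v. res (Suc i) v = map_option ((@) P) (res i v)"
proof -
  define t where "t = i - 1"
  have t: "n \<le> t" "Suc t = i" using assms(1) by (auto simp: t_def)
  define W where "W = common_output (res t) z"
  define \<delta> where "\<delta> = nat (shift (Suc i) - shift i)"
  have "res (Suc i) v = map_option ((@) (drop (length W - \<delta>) W)) (res i v)" for v
  proof (cases "res i v")
    case None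
    then show ?thesis using dom_stable[of i v] dom_stable[of "Suc i" v] t by simp
  next
    case (Some g0)
    obtain g1 gn where g: "res (Suc i) v = Some g1" "res n v = Some gn"
      using Some dom_stable[of i v] dom_stable[of "Suc i" v] t by fastforce
    have len: "length g1 = length g0 + \<delta>"
      using shift_eq[of "Suc i" v g1 gn] shift_eq[of i v g0 gn] g Some t assms(2)[of "Suc i"]
      by (simp add: \<delta>_def)
    then obtain P where g1: "g1 = P @ g0" "length P = \<delta>"
      using suffix_comparable[of i "Suc i" v g0 g1] Some g t by (auto simp: suffix_def)
    obtain gz where gz: "res n (z @ v) = Some gz"
      using dom_stable[of i "z @ v"] res_Cons_z[of i v] g t by fastforce
    have zt: "res t (z @ v) = Some (W @ g0)" and zi: "res i (z @ v) = Some (common_output (res i) z @ g1)"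
      using res_Cons_z[of t v] res_Cons_z[of i v] Some g t by (simp_all add: W_def)
    have "length (common_output (res i) z @ g1) \<le> length (W @ g0)"
      using shift_eq[OF _ zt gz] shift_eq[OF _ zi gz] assms(2)[of t] t by simp
    then have "suffix (common_output (res i) z @ P @ g0) (W @ g0)"
      using suffix_comparable[OF _ _ zi zt] g1 t by simp
    then have "suffix P W" by (metis append_assoc same_suffix_suffix suffix_appendD)
    then have "P = drop (length W - \<delta>) W" using g1(2) by (auto simp: suffix_def)
    then show ?thesis using g Some g1 by simp
  qed
  then show ?thesis using that by blast
qed

lemma res_Suc_eq_if_shift_minimal:
  assumes "Suc n \<le> i" "\<And>j. n \<le> j \<Longrightarrow> shift i \<le> shift j"
  shows "res (Suc i) = res i"
proof -
  obtain P where P: "\<And>v. res (Suc i) v = map_option ((@) P) (res i v)"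
    using res_Suc_prepend[OF assms] by metis
  have "ran (res i) \<noteq> {}" using live dom_stable[of i v0] assms(1) by (auto simp: ran_def)
  then have "common_output (res (Suc i)) [] = P @ common_output (res i) []"
    using residual_eq_residual_Nil(2)[of "res (Suc i)" "[]" P "res i"] P by simp
  then have "P = []" using common_output_res_Nil assms(1) by simp
  then show ?thesis using P by (simp add: fun_eq_iff)
qed


lemma shift_periodic:
  assumes "n \<le> j" shows "shift j = shift (n + p + (j - n) mod p)"
proof -
  have "n + p + (j - n) mod p = (n + (j - n) mod p) + p" by simp
  also have "res \<dots> = res (n + (j - n) mod p)" using res_periodic n0_le by simp
  also have "\<dots> = res j" using res_reduce[OF assms] by simp
  finally show ?thesis by (simp add: shift_def)
qed

lemma res_Suc_eq: "res (Suc n) = res n"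
proof -
  define I where "I = {n + p..<n + 2 * p}"
  have fin: "finite (shift ` I)" and "shift ` I \<noteq> {}" using period_pos by (auto simp: I_def)
  then have "Min (shift ` I) \<in> shift ` I" by (rule Min_in)
  then obtain i where i: "i \<in> I" "shift i = Min (shift ` I)" by (metis imageE)
  have minimal: "shift i \<le> shift j" if "n \<le> j" for j
  proof -
    have "n + p + (j - n) mod p \<in> I" using period_pos by (simp add: I_def)
    then show ?thesis using i(2) shift_periodic[OF that] Min_le[OF fin] by simp
  qed
  have const: "res (i + k) = res i" for k
  proof (induction k)
    case (Suc k)
    have "shift (i + k) = shift i" using Suc.IH by (simp add: shift_def)
    then have "res (Suc (i + k)) = res (i + k)"
      using i(1) minimal by (intro res_Suc_eq_if_shift_minimal) (auto simp: I_def)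
    then show ?case using Suc.IH by simp
  qed simp
  have "i \<le> n + p * 2" using i(1) by (simp add: I_def)
  then have "res (n + p * 2) = res i" "res (Suc n + p * 2) = res i"
    using const[of "n + p * 2 - i"] const[of "Suc n + p * 2 - i"] by simp_all
  then show ?thesis using res_periodic_mult[of n 2] res_periodic_mult[of "Suc n" 2] n0_le by simp
qed

end

lemma (in periodic_powers) res_eventually_constant:
  assumes "n0 \<le> n" shows "res (Suc n) = res n"
proof (cases "res n = Map.empty")
  case True
  then show ?thesis by (simp add: res_Suc residual_def)
next
  case False
  then obtain v0 where "res n v0 \<noteq> None" by (meson ext)
  then interpret live_periodic_powers T f N x z n0 p n v0
    using assms by unfold_locales
  show ?thesis by (rule res_Suc_eq)
qed

lemma residual_powers_eventually_constant:
  fixes f :: "'a::finite list \<Rightarrow> 'a list option"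
  assumes "wf_aut (aut T)" "aperiodic_aut (aut T)" "realizes T f" "finite (residuals f)"
  obtains n where "\<And>j. n \<le> j \<Longrightarrow> residual f (x @ wpow z (Suc j)) = residual f (x @ wpow z j)"
proof -
  obtain N where N: "\<And>w. trans_cong (aut T) (wpow w N) (wpow w (Suc N))"
    using assms(2) unfolding aperiodic_aut_def aperiodic_rel_def by blast
  let ?h = "\<lambda>j. residual f (x @ wpow z j)"
  have "?h (Suc j) = residual (?h j) z" for j
    by (simp add: residual_append[symmetric] wpow_Suc_right)
  moreover have "?h j \<in> insert Map.empty (residuals f)" for j
    by (auto simp: residuals_def extendable_iff_residual)
  moreover have "finite (insert Map.empty (residuals f))" using assms(4) by simp
  ultimately obtain n0 p where "0 < p" "\<And>j. n0 \<le> j \<Longrightarrow> ?h (j + p) = ?h j"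
    using iterate_eventually_periodic[of "insert Map.empty (residuals f)" ?h "\<lambda>g. residual g z"] by metis
  then interpret periodic_powers T f N x z n0 p
    using assms(1,3) N by unfold_locales
  have "res (Suc j) = res j" if "n0 \<le> j" for j
    using that by (rule res_eventually_constant)
  then show ?thesis using that[of n0] unfolding res_def by blast
qed

lemma residual_powers_stable:
  fixes f :: "'a::finite list \<Rightarrow> 'a list option"
  assumes "wf_aut (aut T)" "aperiodic_aut (aut T)" "realizes T f" "finite (residuals f)"
    and "g \<in> residuals f"
  defines "K \<equiv> card (insert Map.empty (residuals f))"
  shows "residual g (wpow z K) = residual g (wpow z (Suc K))"
proof -
  obtain x where g: "g = residual f x" using assms(5) by (auto simp: residuals_def)
  obtain n where "\<And>j. n \<le> j \<Longrightarrow> residual f (x @ wpow z (Suc j)) = residual f (x @ wpow z j)"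
    using residual_powers_eventually_constant[OF assms(1-4), where x = x and z = z] by metis
  moreover have "residual f (x @ wpow z j) \<in> insert Map.empty (residuals f)" for j
    by (auto simp: residuals_def extendable_iff_residual)
  moreover have "residual f (x @ wpow z (Suc j)) = residual (residual f (x @ wpow z j)) z" for j
    by (simp add: residual_append[symmetric] wpow_Suc_right)
  ultimately have "residual f (x @ wpow z (Suc K)) = residual f (x @ wpow z K)"
    unfolding K_def using assms(4) by (intro iterate_stable_from_card) auto
  then show ?thesis by (simp add: g residual_append)
qed

theorem theorem2p4:
  fixes f :: "'a::finite list \<Rightarrow> 'a list option"
  assumes "sequential_transduction f"
  shows "Ap_sequential f \<longleftrightarrow> Ap_rational f"
proof
  assume "Ap_sequential f"
  then show "Ap_rational f"
    unfolding Ap_sequential_def Ap_rational_def using realizes_functional by blast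
next
  assume "Ap_rational f"
  then obtain T where T: "wf_aut (aut T)" "aperiodic_aut (aut T)" "realizes T f"
    unfolding Ap_rational_def by blast
  have fin: "finite (residuals f)" using finite_residuals[OF assms] .
  then obtain enc :: "('a list \<Rightarrow> 'a list option) \<Rightarrow> nat" where inj: "inj_on enc (residuals f)"
    using finite_imp_inj_to_nat_seg by blast
  have "aperiodic_aut (aut (canonical_transducer f enc))"
    using residual_powers_stable[OF T fin] by (rule canonical_aperiodic[OF inj])
  then show "Ap_sequential f"
    unfolding Ap_sequential_def
    using canonical_wf[OF inj fin] canonical_deterministic[OF inj] canonical_realizes[OF inj] by blast
qed

end
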